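(* Consider $v$ CRs whose per-segment sub-Nyquist sample numbers $M_1,\dots,M_v$ are distinct consecutive primes with $M_iM_j>N$ for all $i\ne j$, and suppose the Nyquist spectrum is $s$-sparse (at most $s$ occupied bins, forming the support $\Omega\subseteq\{0,\dots,N-1\}$). Fix a bin $k$ and threshold $\lambda_k>0$, and use the decision rule: declare $\mathcal H_{1,k}$ iff $\widehat{E_s}[k]>\lambda_k$. Assume the following model for the test statistic: under $\mathcal H_{0,k}$ (bin $k$ unoccupied), $\widehat{E_s}[k]\sim\chi^2_{2Jv}\big(\tfrac{2}{N}\sum_{i\in\Upsilon_k}M_i\gamma_i[k]\big)$, and under $\mathcal H_{1,k}$ (bin $k$ occupied), $\widehat{E_s}[k]\sim\chi^2_{2Jv}(\mu)$ for some $\mu\ge \tfrac{2}{N}\sum_{i=1}^{v}M_i\gamma_i[k]$. Then $|\Upsilon_k|\le s$, and for any set $\Upsilon\supseteq \Upsilon_k$ of $s$ CRs, the probability of false alarm $P_{f,k}=\Pr(\widehat{E_s}[k]>\lambda_k\mid\mathcal H_{0,k})$ and probability of detection $P_{d,k}=\Pr(\widehat{E_s}[k]>\lambda_k\mid\mathcal H_{1,k})$ satisfy $$\frac{\Gamma(Jv,\lambda_k/2)}{\Gamma(Jv)}\le P_{f,k}\le Q_{Jv}\Big(\sqrt{\tfrac{2}{N}\textstyle\sum_{i\in\Upsilon}M_i\gamma_i[k]},\sqrt{\lambda_k}\Big),\qquad P_{d,k}\ge Q_{Jv}\Big(\sqrt{\tfrac{2}{N}\textstyle\sum_{i=1}^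{v}M_i\gamma_i[k]},\sqrt{\lambda_k}\Big).$$
   Context: Multi-rate sub-Nyquist spectrum sensing: $v$ CRs observe a signal over time $T$; Nyquist sampling would give $JN$ samples split into $J$ segments of $N$ samples. CR $i$ samples at a sub-Nyquist rate giving $JM_i$ samples, split into $J$ segments of $M_i$ samples; $Y_{i,j}[m]$ ($m=0,\dots,M_i-1$) is the DFT of segment $j$ at CR $i$, $E_{s,i}[m]=\sum_{j=1}^J|Y_{i,j}[m]|^2$, and the fusion-center test statistic is $\widehat{E_s}[k]=\sum_{i=1}^v \frac{N}{M_i}E_{s,i}[k \bmod M_i]$, $k=0,\dots,N-1$. $\gamma_i[k]\ge0$ denotes the SNR at CR $i$ associated with bin $k$ (for an unoccupied bin, the SNR of the occupied component aliased onto it). $\Upsilon_k$ is the set of CRs $i$ for which $k$ is an aliased frequency, i.e. $k\notin\Omega$ and $k\equiv k'\pmod{M_i}$ for some $k'\in\Omega$. $\chi^2_{d}(\mu)$ is the noncentral chi-square distribution with $d$ degrees of freedom and noncentrality parameter $\mu$ ($\chi^2_d(0)$ central). $\Gamma(a)$ is the gamma function, $\Gamma(a,x)$ the upper incomplete gamma function, and $Q_u(a,x)=\frac{1}{a^{u-1}}\int_x^\infty t^u e^{-(a^2+t^2)/2}I_{u-1}(at)\,dt$ the generalized Marcum Q-function, $I_\nu$ the modified Bessel function of the first kind. *)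

theory Defs
  imports "HOL-Probability.Probability" "HOL-Computational_Algebra.Primes"
begin

definition upper_Gamma :: "real \<Rightarrow> real \<Rightarrow> real" where
  "upper_Gamma a x = (LBINT t:{x..}. t powr (a - 1) * exp (- t))"

definition bessel_I :: "nat \<Rightarrow> real \<Rightarrow> real" where
  "bessel_I \<nu> z = (\<Sum>m. (z / 2) ^ (2 * m + \<nu>) / (fact m * Gamma (real m + real \<nu> + 1)))"

text \<open>Generalized Marcum Q-function Q_u(a,x); at a = 0 it takes its limiting
  (continuous-extension) value Gamma(u, x^2/2) / Gamma(u).\<close>
definition marcumQ :: "nat \<Rightarrow> real \<Rightarrow> real \<Rightarrow> real" where
  "marcumQ u a x =
     (if a = 0 then upper_Gamma (real u) (x ^ 2 / 2) / Gamma (real u)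
      else (1 / a ^ (u - 1)) *
        (LBINT t:{x..}. t ^ u * exp (- (a ^ 2 + t ^ 2) / 2) * bessel_I (u - 1) (a * t)))"

definition chi2_pdf :: "nat \<Rightarrow> real \<Rightarrow> real" where
  "chi2_pdf d x =
     (if x > 0 then x powr (real d / 2 - 1) * exp (- x / 2) /
        (2 powr (real d / 2) * Gamma (real d / 2)) else 0)"

definition nc_chi2_pdf :: "nat \<Rightarrow> real \<Rightarrow> real \<Rightarrow> real" where
  "nc_chi2_pdf d \<mu> x =
     (\<Sum>j. exp (- \<mu> / 2) * (\<mu> / 2) ^ j / fact j * chi2_pdf (d + 2 * j) x)"

definition has_nc_chi2_law :: "'a measure \<Rightarrow> ('a \<Rightarrow> real) \<Rightarrow> nat \<Rightarrow> real \<Rightarrow> bool" where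
  "has_nc_chi2_law M X d \<mu> \<longleftrightarrow>
     prob_space M \<and> X \<in> borel_measurable M \<and>
     distr M lborel X = density lborel (\<lambda>x. ennreal (nc_chi2_pdf d \<mu> x))"

text \<open>Upsilon_k: CRs i in 1..v for which bin k is an aliased frequency.\<close>
definition aliased_CRs :: "nat \<Rightarrow> (nat \<Rightarrow> nat) \<Rightarrow> nat set \<Rightarrow> nat \<Rightarrow> nat set" where
  "aliased_CRs v M \<Omega> k =
     {i \<in> {1..v}. k \<notin> \<Omega> \<and> (\<exists>k'\<in>\<Omega>. k mod M i = k' mod M i)}"

end

theory Submission
  imports Defs "HOL-Real_Asymp.Real_Asymp" "HOL-Number_Theory.Cong"
begin

text \<open>A noncentral chi-square variable with \<open>2n\<close> degrees of freedom and noncentrality \<open>2m\<close> is a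
  Poisson(\<open>m\<close>) mixture of central chi-square variables with \<open>2(n + j)\<close> degrees of freedom, and the
  tail of the latter at \<open>2y\<close> is the Erlang tail \<open>Pr(Poisson(y) < n + j)\<close>, which increases with
  \<open>j\<close>. Differentiating in the Poisson mean, the tail of the mixture is therefore nondecreasing in
  the noncentrality. Expanding the Bessel function termwise identifies \<open>Q\<^sub>n(a, x)\<close> with the tail
  at \<open>x\<^sup>2\<close> of the noncentral chi-square law with noncentrality \<open>a\<^sup>2\<close>, and \<open>\<Gamma>(n, y) / \<Gamma>(n)\<close> is the
  central tail, so all three probability bounds are instances of this monotonicity.

  For \<open>|\<Upsilon>\<^sub>k| \<le> s\<close>, assign to each aliasing CR \<open>i\<close> some \<open>k' \<in> \<Omega>\<close> with \<open>k \<equiv> k' (mod M\<^sub>i)\<close>. Two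
  CRs sharing \<open>k'\<close> would give \<open>M\<^sub>i M\<^sub>j | k - k'\<close> with \<open>0 < |k - k'| < N < M\<^sub>i M\<^sub>j\<close>, so this map
  into \<open>\<Omega>\<close> is injective.\<close>

definition poisson_weight :: "real \<Rightarrow> nat \<Rightarrow> real" where
  "poisson_weight m j = exp (- m) * m ^ j / fact j"

definition erlang_tail :: "nat \<Rightarrow> real \<Rightarrow> real" where
  "erlang_tail n y = (\<Sum>i<n. poisson_weight y i)"

lemma poisson_weight_nonneg: "0 \<le> m \<Longrightarrow> 0 \<le> poisson_weight m j"
  by (simp add: poisson_weight_def)

lemma poisson_weight_sums: "poisson_weight m sums 1"
proof -
  have "(\<lambda>j. exp (- m) * (m ^ j / fact j)) sums (exp (- m) * exp m)"
    using exp_converges[of m] by (intro sums_mult) (simp add: divide_inverse_commute)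
  then show ?thesis by (simp add: poisson_weight_def[abs_def] exp_minus field_simps)
qed

lemma summable_poisson_weight_times_bounded:
  assumes "\<And>j. \<bar>D j\<bar> \<le> B"
  shows "summable (\<lambda>j. poisson_weight m j * D j)"
proof (rule summable_comparison_test')
  show "summable (\<lambda>j. B * (exp (- m) * (inverse (fact j) * \<bar>m\<bar> ^ j)))"
    by (intro summable_mult summable_exp)
  show "norm (poisson_weight m j * D j) \<le> B * (exp (- m) * (inverse (fact j) * \<bar>m\<bar> ^ j))" for j
    using mult_left_mono[OF assms[of j], of "exp (- m) * (inverse (fact j) * \<bar>m\<bar> ^ j)"]
    by (simp add: poisson_weight_def abs_mult power_abs divide_inverse mult_ac)
qed

lemma poisson_weight_has_derivative:
  "((\<lambda>t. poisson_weight t (Suc k)) has_real_derivative poisson_weight t k - poisson_weight t (Suc k)) (at t)"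
proof -
  have "((\<lambda>t. poisson_weight t (Suc k)) has_real_derivative
      (- exp (- t)) * t ^ Suc k / fact (Suc k) + exp (- t) * (real (Suc k) * t ^ k) / fact (Suc k)) (at t)"
    unfolding poisson_weight_def
    by (auto intro!: derivative_eq_intros simp del: fact_Suc power_Suc of_nat_Suc)
      (simp add: diff_divide_distrib mult_ac)
  then show ?thesis
    by (simp add: poisson_weight_def fact_Suc divide_simps mult_ac del: of_nat_Suc)
qed

lemma erlang_tail_has_derivative:
  "(erlang_tail (Suc k) has_real_derivative - poisson_weight t k) (at t)"
proof (induction k)
  case 0
  show ?case unfolding erlang_tail_def poisson_weight_def by (auto intro!: derivative_eq_intros)
next
  case (Suc k)
  have "erlang_tail (Suc (Suc k)) = (\<lambda>t. erlang_tail (Suc k) t + poisson_weight t (Suc k))"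
    by (auto simp: erlang_tail_def)
  then show ?case using DERIV_add[OF Suc poisson_weight_has_derivative[of k t]] by simp
qed

lemma erlang_tail_tendsto_0: "(erlang_tail n \<longlongrightarrow> 0) at_top"
proof -
  have "((\<lambda>t::real. \<Sum>i<n. t ^ i / exp t / fact i) \<longlongrightarrow> 0) at_top"
    by (rule tendsto_null_sum) (rule tendsto_divide_zero[OF tendsto_power_div_exp_0])
  moreover have "(\<lambda>t. \<Sum>i<n. t ^ i / exp t / fact i) = erlang_tail n"
    by (auto simp: erlang_tail_def poisson_weight_def exp_minus field_simps)
  ultimately show ?thesis by simp
qed

lemma erlang_tail_nonneg: "0 \<le> y \<Longrightarrow> 0 \<le> erlang_tail n y"
  unfolding erlang_tail_def by (intro sum_nonneg poisson_weight_nonneg)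

lemma erlang_tail_le_1: "0 \<le> y \<Longrightarrow> erlang_tail n y \<le> 1"
  unfolding erlang_tail_def
  using sum_le_suminf[OF sums_summable[OF poisson_weight_sums], of "{..<n}"]
    sums_unique[OF poisson_weight_sums] poisson_weight_nonneg by fastforce

lemma abs_erlang_tail_le_1: "0 \<le> y \<Longrightarrow> \<bar>erlang_tail n y\<bar> \<le> 1"
  using erlang_tail_nonneg erlang_tail_le_1 by (simp add: abs_le_iff)

lemma poisson_weight_le_1: "0 \<le> m \<Longrightarrow> poisson_weight m j \<le> 1"
  using erlang_tail_le_1[of m "Suc j"] erlang_tail_nonneg[of m j]
  by (simp add: erlang_tail_def)

lemma nn_integral_poisson_weight_subst:
  fixes \<phi> \<phi>' :: "real \<Rightarrow> real"
  assumes der: "\<And>t. x \<le> t \<Longrightarrow> (\<phi> has_real_derivative \<phi>' t) (at t)"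
    and nonneg: "\<And>t. x \<le> t \<Longrightarrow> 0 \<le> \<phi> t" "\<And>t. x \<le> t \<Longrightarrow> 0 \<le> \<phi>' t"
    and lim: "filterlim \<phi> at_top at_top"
    and meas: "(\<lambda>t. poisson_weight (\<phi> t) k * \<phi>' t) \<in> borel_measurable borel"
  shows "(\<integral>\<^sup>+t. ennreal (poisson_weight (\<phi> t) k * \<phi>' t) * indicator {x..} t \<partial>lborel)
       = ennreal (erlang_tail (Suc k) (\<phi> x))"
proof -
  have "(\<integral>\<^sup>+t. ennreal (poisson_weight (\<phi> t) k * \<phi>' t) * indicator {x..} t \<partial>lborel)
      = ennreal (0 - (- erlang_tail (Suc k) (\<phi> x)))"
  proof (rule nn_integral_FTC_atLeast[OF meas])
    fix t assume t: "x \<le> t"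
    show "((\<lambda>t. - erlang_tail (Suc k) (\<phi> t)) has_real_derivative poisson_weight (\<phi> t) k * \<phi>' t) (at t)"
      using DERIV_chain2[OF erlang_tail_has_derivative der[OF t]] DERIV_minus by fastforce
    show "0 \<le> poisson_weight (\<phi> t) k * \<phi>' t"
      using nonneg[OF t] by (simp add: poisson_weight_nonneg)
  next
    show "((\<lambda>t. - erlang_tail (Suc k) (\<phi> t)) \<longlongrightarrow> 0) at_top"
      using tendsto_minus[OF filterlim_compose[OF erlang_tail_tendsto_0 lim]] by simp
  qed
  then show ?thesis by simp
qed

lemma upper_Gamma_eq_erlang_tail:
  assumes y: "y > 0"
  shows "upper_Gamma (real (Suc k)) y / Gamma (real (Suc k)) = erlang_tail (Suc k) y"
proof -
  have meas: "(\<lambda>t::real. poisson_weight t k * 1) \<in> borel_measurable borel"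
    unfolding poisson_weight_def by measurable
  have "upper_Gamma (real (Suc k)) y
      = enn2real (\<integral>\<^sup>+t. ennreal (indicator {y..} t *\<^sub>R (t powr (real (Suc k) - 1) * exp (- t))) \<partial>lborel)"
    unfolding upper_Gamma_def set_lebesgue_integral_def
    by (rule integral_eq_nn_integral) (auto simp: indicator_def)
  also have "(\<integral>\<^sup>+t. ennreal (indicator {y..} t *\<^sub>R (t powr (real (Suc k) - 1) * exp (- t))) \<partial>lborel)
      = (\<integral>\<^sup>+t. ennreal (fact k) * (ennreal (poisson_weight t k * 1) * indicator {y..} t) \<partial>lborel)"
  proof (rule nn_integral_cong)
    fix t :: real
    show "ennreal (indicator {y..} t *\<^sub>R (t powr (real (Suc k) - 1) * exp (- t))) =
         ennreal (fact k) * (ennreal (poisson_weight t k * 1) * indicator {y..} t)"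
      using y by (cases "y \<le> t")
        (simp_all add: powr_realpow ennreal_mult'[symmetric] indicator_def poisson_weight_def)
  qed
  also have "\<dots> = ennreal (fact k) * ennreal (erlang_tail (Suc k) y)"
    using nn_integral_poisson_weight_subst[of y "\<lambda>t. t" "\<lambda>_. 1" k, OF _ _ _ filterlim_ident meas] y
    by (subst nn_integral_cmult) (use meas in \<open>auto intro!: derivative_eq_intros\<close>)
  finally have "upper_Gamma (real (Suc k)) y = fact k * erlang_tail (Suc k) y"
    using erlang_tail_nonneg[of y "Suc k"] y by (simp add: ennreal_mult'[symmetric])
  then show ?thesis
    using Gamma_fact[of k, where 'a=real] by simp
qed

lemma chi2_pdf_even:
  assumes "x > 0"
  shows "chi2_pdf (2 * Suc k) x = poisson_weight (x / 2) k / 2"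
proof -
  have dof: "real (2 * Suc k) / 2 = real (Suc k)" "real (Suc k) - 1 = real k"
    by simp_all
  have "Gamma (real (Suc k)) = fact k"
    using Gamma_fact[of k, where 'a=real] by simp
  moreover have "(2::real) powr real (Suc k) = 2 ^ Suc k"
    by (rule powr_realpow) simp
  ultimately show ?thesis
    using assms unfolding chi2_pdf_def poisson_weight_def dof
    by (simp add: powr_realpow power_divide field_simps del: of_nat_Suc)
qed

lemma chi2_pdf_even_bounds: "0 \<le> chi2_pdf (2 * Suc k) x" "chi2_pdf (2 * Suc k) x \<le> 1 / 2"
  using chi2_pdf_even[of x k] poisson_weight_nonneg[of "x / 2" k] poisson_weight_le_1[of "x / 2" k]
  by (cases "x > 0"; simp add: chi2_pdf_def)+

lemma borel_measurable_chi2_pdf: "chi2_pdf d \<in> borel_measurable borel"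
  unfolding chi2_pdf_def by measurable

lemma nn_integral_chi2_pdf_even_greaterThan:
  assumes lam: "lam > 0"
  shows "(\<integral>\<^sup>+x. ennreal (chi2_pdf (2 * Suc k) x) * indicator {lam<..} x \<partial>lborel)
       = ennreal (erlang_tail (Suc k) (lam / 2))"
proof -
  have meas: "(\<lambda>t::real. poisson_weight (t / 2) k * (1 / 2)) \<in> borel_measurable borel"
    unfolding poisson_weight_def by measurable
  have "(\<integral>\<^sup>+x. ennreal (chi2_pdf (2 * Suc k) x) * indicator {lam<..} x \<partial>lborel)
      = (\<integral>\<^sup>+t. ennreal (poisson_weight (t / 2) k * (1 / 2)) * indicator {lam..} t \<partial>lborel)"
  proof (rule nn_integral_cong_AE)
    show "AE x in lborel. ennreal (chi2_pdf (2 * Suc k) x) * indicator {lam<..} x =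
        ennreal (poisson_weight (x / 2) k * (1 / 2)) * indicator {lam..} x"
      using AE_lborel_singleton[of lam]
    proof eventually_elim
      case (elim x)
      show ?case
      proof (cases "lam < x")
        case True
        then show ?thesis using lam by (subst chi2_pdf_even) (auto simp: indicator_def)
      qed (use elim in \<open>simp add: indicator_def\<close>)
    qed
  qed
  also have "\<dots> = ennreal (erlang_tail (Suc k) (lam / 2))"
  proof (rule nn_integral_poisson_weight_subst[OF _ _ _ _ meas])
    show "((\<lambda>t. t / 2) has_real_derivative 1 / 2) (at t)" for t :: real
      by (auto intro!: derivative_eq_intros)
    show "filterlim (\<lambda>t::real. t / 2) at_top at_top" by real_asymp
  qed (use lam in auto)
  finally show ?thesis .
qed

lemma poisson_expectation_has_derivative:
  fixes C :: "nat \<Rightarrow> real"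
  assumes bound: "\<And>j. \<bar>C j\<bar> \<le> B"
  shows "((\<lambda>m. \<Sum>j. poisson_weight m j * C j) has_real_derivative
           (\<Sum>j. poisson_weight m j * (C (Suc j) - C j))) (at m)"
proof -
  have summable_coeffs: "summable (\<lambda>j. D j / fact j * z ^ j)"
    if "\<And>j. \<bar>D j\<bar> \<le> B'" for D :: "nat \<Rightarrow> real" and B' z :: real
  proof (rule summable_comparison_test')
    show "summable (\<lambda>j. B' * (inverse (fact j) * \<bar>z\<bar> ^ j))"
      by (intro summable_mult summable_exp)
    show "norm (D j / fact j * z ^ j) \<le> B' * (inverse (fact j) * \<bar>z\<bar> ^ j)" for j
      using mult_right_mono[OF that[of j], of "inverse (fact j) * \<bar>z\<bar> ^ j"]
      by (simp add: abs_mult power_abs divide_inverse mult_ac)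
  qed
  have as_power_series: "(\<Sum>j. poisson_weight z j * D j) = exp (- z) * (\<Sum>j. D j / fact j * z ^ j)"
    if "\<And>j. \<bar>D j\<bar> \<le> B'" for D :: "nat \<Rightarrow> real" and B' z :: real
    using suminf_mult[OF summable_coeffs[OF that, where z = z], of "exp (- z)"]
    by (simp add: poisson_weight_def mult_ac)
  define c where "c j = C j / fact j" for j
  have diffs_c: "diffs c j = C (Suc j) / fact j" for j
    by (simp add: diffs_def c_def field_simps del: of_nat_Suc)
  have sc: "summable (\<lambda>j. c j * z ^ j)" for z
    unfolding c_def using summable_coeffs[OF bound] .
  have sd: "summable (\<lambda>j. diffs c j * z ^ j)" for z
    unfolding diffs_c using summable_coeffs[of "\<lambda>j. C (Suc j)"] bound by blast
  have "((\<lambda>z. \<Sum>j. c j * z ^ j) has_real_derivative (\<Sum>j. diffs c j * m ^ j)) (at m)"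
    by (rule termdiffs_strong'[of "\<bar>m\<bar> + 1"]) (use sc in auto)
  then have "((\<lambda>z. exp (- z) * (\<Sum>j. c j * z ^ j)) has_real_derivative
      exp (- m) * ((\<Sum>j. diffs c j * m ^ j) - (\<Sum>j. c j * m ^ j))) (at m)"
    by (auto intro!: derivative_eq_intros simp: algebra_simps)
  moreover have "(\<Sum>j. diffs c j * m ^ j) - (\<Sum>j. c j * m ^ j)
      = (\<Sum>j. (C (Suc j) - C j) / fact j * m ^ j)"
    using suminf_diff[OF sd sc] unfolding diffs_c c_def by (simp add: diff_divide_distrib left_diff_distrib)
  moreover have "\<bar>C (Suc j) - C j\<bar> \<le> 2 * B" for j
    using bound[of j] bound[of "Suc j"] by linarith
  ultimately show ?thesis
    using as_power_series[OF bound] as_power_series[of "\<lambda>j. C (Suc j) - C j" "2 * B"]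
    unfolding c_def by simp
qed

lemma poisson_expectation_mono:
  fixes C :: "nat \<Rightarrow> real"
  assumes mono: "\<And>j. C j \<le> C (Suc j)" and bound: "\<And>j. \<bar>C j\<bar> \<le> B"
    and "0 \<le> m" "m \<le> m'"
  shows "(\<Sum>j. poisson_weight m j * C j) \<le> (\<Sum>j. poisson_weight m' j * C j)"
proof (rule DERIV_nonneg_imp_nondecreasing[OF \<open>m \<le> m'\<close>])
  fix x assume "m \<le> x" "x \<le> m'"
  have "\<bar>C (Suc j) - C j\<bar> \<le> 2 * B" for j
    using bound[of j] bound[of "Suc j"] by linarith
  then have "0 \<le> (\<Sum>j. poisson_weight x j * (C (Suc j) - C j))"
    using mono \<open>0 \<le> m\<close> \<open>m \<le> x\<close>
    by (intro suminf_nonneg summable_poisson_weight_times_bounded mult_nonneg_nonneg poisson_weight_nonneg)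
      auto
  then show "\<exists>d. ((\<lambda>m. \<Sum>j. poisson_weight m j * C j) has_real_derivative d) (at x) \<and> 0 \<le> d"
    using poisson_expectation_has_derivative[where C = C, OF bound] by blast
qed

text \<open>\<open>poisson_mixture_tail n y m = Pr(X > 2y)\<close> for \<open>X \<sim> \<chi>\<^sup>2\<^sub>2\<^sub>n(2m)\<close>.\<close>

definition poisson_mixture_tail :: "nat \<Rightarrow> real \<Rightarrow> real \<Rightarrow> real" where
  "poisson_mixture_tail n y m = (\<Sum>j. poisson_weight m j * erlang_tail (n + j) y)"

lemma summable_poisson_mixture_tail:
  "0 \<le> y \<Longrightarrow> summable (\<lambda>j. poisson_weight m j * erlang_tail (n + j) y)"
  by (rule summable_poisson_weight_times_bounded) (rule abs_erlang_tail_le_1)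

lemma poisson_mixture_tail_nonneg: "0 \<le> y \<Longrightarrow> 0 \<le> m \<Longrightarrow> 0 \<le> poisson_mixture_tail n y m"
  unfolding poisson_mixture_tail_def
  by (intro suminf_nonneg summable_poisson_mixture_tail mult_nonneg_nonneg poisson_weight_nonneg
      erlang_tail_nonneg)

lemma poisson_mixture_tail_0: "poisson_mixture_tail n y 0 = erlang_tail n y"
proof -
  have "(\<lambda>j. poisson_weight 0 j * erlang_tail (n + j) y) = (\<lambda>j. if j = 0 then erlang_tail n y else 0)"
    by (auto simp: poisson_weight_def)
  then show ?thesis
    unfolding poisson_mixture_tail_def
    using sums_single[of 0 "\<lambda>_. erlang_tail n y"] by (simp add: sums_iff)
qed

lemma poisson_mixture_tail_mono:
  assumes "0 \<le> y" "0 \<le> m" "m \<le> m'"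
  shows "poisson_mixture_tail n y m \<le> poisson_mixture_tail n y m'"
  unfolding poisson_mixture_tail_def
proof (rule poisson_expectation_mono[where B = 1])
  show "erlang_tail (n + j) y \<le> erlang_tail (n + Suc j) y" for j
    using assms(1) by (simp add: erlang_tail_def poisson_weight_nonneg)
  show "\<bar>erlang_tail (n + j) y\<bar> \<le> 1" for j
    using assms(1) by (rule abs_erlang_tail_le_1)
qed (use assms in auto)

lemma ennreal_nc_chi2_pdf_even:
  assumes "0 \<le> \<mu>"
  shows "ennreal (nc_chi2_pdf (2 * Suc u) \<mu> x)
       = (\<Sum>j. ennreal (poisson_weight (\<mu> / 2) j * chi2_pdf (2 * Suc (u + j)) x))"
proof -
  have "2 * Suc u + 2 * j = 2 * Suc (u + j)" for j by simp
  then have "nc_chi2_pdf (2 * Suc u) \<mu> x = (\<Sum>j. poisson_weight (\<mu> / 2) j * chi2_pdf (2 * Suc (u + j)) x)"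
    by (simp add: nc_chi2_pdf_def poisson_weight_def)
  also have "ennreal \<dots> = (\<Sum>j. ennreal (poisson_weight (\<mu> / 2) j * chi2_pdf (2 * Suc (u + j)) x))"
  proof (rule suminf_ennreal2[symmetric])
    show "0 \<le> poisson_weight (\<mu> / 2) j * chi2_pdf (2 * Suc (u + j)) x" for j
      using assms chi2_pdf_even_bounds(1)[of "u + j" x] by (simp add: poisson_weight_nonneg)
    show "summable (\<lambda>j. poisson_weight (\<mu> / 2) j * chi2_pdf (2 * Suc (u + j)) x)"
      by (rule summable_poisson_weight_times_bounded[where B = "1 / 2"])
        (metis abs_of_nonneg chi2_pdf_even_bounds)
  qed
  finally show ?thesis .
qed

lemma borel_measurable_nc_chi2_pdf_even:
  "0 \<le> \<mu> \<Longrightarrow> (\<lambda>x. ennreal (nc_chi2_pdf (2 * Suc u) \<mu> x)) \<in> borel_measurable borel"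
  unfolding ennreal_nc_chi2_pdf_even using borel_measurable_chi2_pdf by measurable

lemma nn_integral_nc_chi2_pdf_even_greaterThan:
  assumes mu: "0 \<le> \<mu>" and lam: "0 < lam"
  shows "(\<integral>\<^sup>+x. ennreal (nc_chi2_pdf (2 * Suc u) \<mu> x) * indicator {lam<..} x \<partial>lborel)
       = ennreal (poisson_mixture_tail (Suc u) (lam / 2) (\<mu> / 2))"
proof -
  let ?w = "poisson_weight (\<mu> / 2)"
  have w: "0 \<le> ?w j" for j using mu by (simp add: poisson_weight_nonneg)
  have "ennreal (nc_chi2_pdf (2 * Suc u) \<mu> x) * indicator {lam<..} x
      = (\<Sum>j. ennreal (?w j) * (ennreal (chi2_pdf (2 * Suc (u + j)) x) * indicator {lam<..} x))" for x
    unfolding ennreal_nc_chi2_pdf_even[OF mu] ennreal_suminf_multc[symmetric]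
    by (intro suminf_cong) (simp add: ennreal_mult'[OF w] mult.assoc)
  then have "(\<integral>\<^sup>+x. ennreal (nc_chi2_pdf (2 * Suc u) \<mu> x) * indicator {lam<..} x \<partial>lborel)
      = (\<integral>\<^sup>+x. (\<Sum>j. ennreal (?w j) * (ennreal (chi2_pdf (2 * Suc (u + j)) x) * indicator {lam<..} x)) \<partial>lborel)"
    by simp
  also have "\<dots> = (\<Sum>j. \<integral>\<^sup>+x. ennreal (?w j) * (ennreal (chi2_pdf (2 * Suc (u + j)) x) * indicator {lam<..} x) \<partial>lborel)"
    by (rule nn_integral_suminf) (use borel_measurable_chi2_pdf in measurable)
  also have "\<dots> = (\<Sum>j. ennreal (?w j) * (\<integral>\<^sup>+x. ennreal (chi2_pdf (2 * Suc (u + j)) x) * indicator {lam<..} x \<partial>lborel))"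
    by (intro suminf_cong nn_integral_cmult) (use borel_measurable_chi2_pdf in measurable)
  also have "\<dots> = (\<Sum>j. ennreal (?w j * erlang_tail (Suc u + j) (lam / 2)))"
    unfolding nn_integral_chi2_pdf_even_greaterThan[OF lam]
    using lam w erlang_tail_nonneg by (simp add: ennreal_mult)
  also have "\<dots> = ennreal (poisson_mixture_tail (Suc u) (lam / 2) (\<mu> / 2))"
    unfolding poisson_mixture_tail_def using lam w erlang_tail_nonneg
    by (intro suminf_ennreal2 mult_nonneg_nonneg summable_poisson_mixture_tail) auto
  finally show ?thesis .
qed

lemma prob_nc_chi2_greater:
  assumes law: "has_nc_chi2_law P X (2 * Suc u) \<mu>" and mu: "0 \<le> \<mu>" and lam: "0 < lam"
  shows "measure P {\<omega> \<in> space P. X \<omega> > lam} = poisson_mixture_tail (Suc u) (lam / 2) (\<mu> / 2)"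
proof -
  have X: "X \<in> borel_measurable P"
    and distr: "distr P lborel X = density lborel (\<lambda>x. ennreal (nc_chi2_pdf (2 * Suc u) \<mu> x))"
    using law unfolding has_nc_chi2_law_def by auto
  have "{\<omega> \<in> space P. X \<omega> > lam} = X -` {lam<..} \<inter> space P" by auto
  then have "measure P {\<omega> \<in> space P. X \<omega> > lam} = measure (distr P lborel X) {lam<..}"
    using X by (simp add: measure_distr)
  also have "\<dots> = enn2real (\<integral>\<^sup>+x. ennreal (nc_chi2_pdf (2 * Suc u) \<mu> x) * indicator {lam<..} x \<partial>lborel)"
    unfolding distr measure_def
    by (subst emeasure_density) (use borel_measurable_nc_chi2_pdf_even[OF mu] in auto)
  finally show ?thesis
    using nn_integral_nc_chi2_pdf_even_greaterThan[OF mu lam, of u] poisson_mixture_tail_nonneg[of "lam / 2" "\<mu> / 2"] mu lam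
    by simp
qed

lemma Gamma_of_nat_add_1: "Gamma (real m + real u + 1) = (fact (m + u) :: real)"
  using Gamma_fact[of "m + u", where 'a=real] by (simp add: add_ac)

lemma summable_bessel_I_series:
  "summable (\<lambda>m. (z / 2) ^ (2 * m + u) / (fact m * Gamma (real m + real u + 1)))"
proof (rule summable_comparison_test')
  define w where "w = \<bar>z / 2\<bar>"
  show "summable (\<lambda>m. w ^ u * (inverse (fact m) * (w\<^sup>2) ^ m))"
    by (intro summable_mult summable_exp)
  fix m
  have "norm ((z / 2) ^ (2 * m + u) / (fact m * Gamma (real m + real u + 1)))
      = w ^ (2 * m + u) / (fact m * fact (m + u))"
    unfolding Gamma_of_nat_add_1 w_def real_norm_def abs_divide power_abs by simp
  also have "w ^ (2 * m + u) = w ^ u * (w\<^sup>2) ^ m"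
    by (simp add: power_add power_mult[symmetric] mult.commute)
  also have "w ^ u * (w\<^sup>2) ^ m / (fact m * fact (m + u)) = w ^ u * (inverse (fact m) * (w\<^sup>2) ^ m) / fact (m + u)"
    by (simp add: divide_inverse)
  also have "\<dots> \<le> w ^ u * (inverse (fact m) * (w\<^sup>2) ^ m) / 1"
    by (rule divide_left_mono) (simp_all add: w_def)
  finally show "norm ((z / 2) ^ (2 * m + u) / (fact m * Gamma (real m + real u + 1)))
      \<le> w ^ u * (inverse (fact m) * (w\<^sup>2) ^ m)" by simp
qed

lemma bessel_I_nonneg: "0 \<le> z \<Longrightarrow> 0 \<le> bessel_I u z"
  unfolding bessel_I_def by (rule suminf_nonneg[OF summable_bessel_I_series]) simp

lemma borel_measurable_bessel_I: "bessel_I u \<in> borel_measurable borel"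
proof (rule borel_measurable_LIMSEQ_real)
  show "(\<lambda>n. \<Sum>m<n. (z / 2) ^ (2 * m + u) / (fact m * Gamma (real m + real u + 1)))
      \<longlonglongrightarrow> bessel_I u z" for z
    unfolding bessel_I_def by (rule summable_LIMSEQ[OF summable_bessel_I_series])
qed measurable

lemma marcum_integrand_sums:
  fixes a t :: real
  shows "(\<lambda>m. a ^ u * poisson_weight (a\<^sup>2 / 2) m * (poisson_weight (t\<^sup>2 / 2) (m + u) * t))
      sums (t ^ Suc u * exp (- (a\<^sup>2 + t\<^sup>2) / 2) * bessel_I u (a * t))"
proof -
  have "(\<lambda>m. (t ^ Suc u * exp (- (a\<^sup>2 + t\<^sup>2) / 2)) *
      ((a * t / 2) ^ (2 * m + u) / (fact m * Gamma (real m + real u + 1))))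
      sums (t ^ Suc u * exp (- (a\<^sup>2 + t\<^sup>2) / 2) * bessel_I u (a * t))"
    unfolding bessel_I_def by (rule sums_mult[OF summable_sums[OF summable_bessel_I_series]])
  moreover have "(t ^ Suc u * exp (- (a\<^sup>2 + t\<^sup>2) / 2)) *
      ((a * t / 2) ^ (2 * m + u) / (fact m * Gamma (real m + real u + 1)))
      = a ^ u * poisson_weight (a\<^sup>2 / 2) m * (poisson_weight (t\<^sup>2 / 2) (m + u) * t)" for m
  proof -
    have "exp (- (a\<^sup>2 + t\<^sup>2) / 2) = exp (- (a\<^sup>2 / 2)) * exp (- (t\<^sup>2 / 2))"
      by (simp add: exp_add[symmetric] add_divide_distrib)
    moreover have "(a * t / 2) ^ (2 * m + u) = a ^ u * (a\<^sup>2) ^ m * (t\<^sup>2) ^ m * t ^ u / (2 ^ m * 2 ^ (m + u))"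
    proof -
      have "(2::real) ^ (m * 2) = 2 ^ m * 2 ^ m"
        by (metis power_mult power2_eq_square)
      then show ?thesis
        by (simp add: power_mult_distrib power_divide power_add power_mult[symmetric] mult_ac)
    qed
    moreover have "(t\<^sup>2 / 2) ^ (m + u) = (t\<^sup>2) ^ m * (t\<^sup>2) ^ u / 2 ^ (m + u)"
      by (simp add: power_divide power_add)
    moreover have "(a\<^sup>2 / 2) ^ m = (a\<^sup>2) ^ m / 2 ^ m"
      by (simp add: power_divide)
    moreover have "t ^ Suc u * t ^ u = (t\<^sup>2) ^ u * t" "t ^ u * t ^ u = (t\<^sup>2) ^ u"
      by (simp_all add: power_mult[symmetric] mult_2 power_add)
    ultimately show ?thesis
      unfolding Gamma_of_nat_add_1 poisson_weight_def by (simp add: field_simps)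
  qed
  ultimately show ?thesis by simp
qed

lemma marcum_integral_eq:
  assumes a: "0 < a" and x: "0 < x"
  shows "(LBINT t:{x..}. t ^ Suc u * exp (- (a\<^sup>2 + t\<^sup>2) / 2) * bessel_I u (a * t))
       = a ^ u * poisson_mixture_tail (Suc u) (x\<^sup>2 / 2) (a\<^sup>2 / 2)"
proof -
  define f where "f t = t ^ Suc u * exp (- (a\<^sup>2 + t\<^sup>2) / 2) * bessel_I u (a * t)" for t
  define K where "K m = a ^ u * poisson_weight (a\<^sup>2 / 2) m" for m
  define g where "g m t = poisson_weight (t\<^sup>2 / 2) (m + u) * t" for m t
  have K: "0 \<le> K m" for m
    unfolding K_def using a by (simp add: poisson_weight_nonneg)
  have g: "0 \<le> t \<Longrightarrow> 0 \<le> g m t" for m t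
    unfolding g_def by (simp add: poisson_weight_nonneg)
  have g_meas: "g m \<in> borel_measurable borel" for m
    unfolding g_def poisson_weight_def by measurable
  have f_sums: "(\<lambda>m. K m * g m t) sums f t" for t
    using marcum_integrand_sums[of a u t] by (simp add: K_def g_def f_def)
  have "(LBINT t:{x..}. f t) = enn2real (\<integral>\<^sup>+t. ennreal (indicator {x..} t *\<^sub>R f t) \<partial>lborel)"
    unfolding set_lebesgue_integral_def
  proof (rule integral_eq_nn_integral)
    show "(\<lambda>t. indicat_real {x..} t *\<^sub>R f t) \<in> borel_measurable lborel"
      unfolding f_def using borel_measurable_bessel_I by measurable
    show "AE t in lborel. 0 \<le> indicat_real {x..} t *\<^sub>R f t"
      using x a bessel_I_nonneg[of "a * _" u] by (intro AE_I2) (auto simp: indicator_def f_def)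
  qed
  also have "(\<integral>\<^sup>+t. ennreal (indicator {x..} t *\<^sub>R f t) \<partial>lborel)
      = (\<integral>\<^sup>+t. (\<Sum>m. ennreal (K m) * (ennreal (g m t) * indicator {x..} t)) \<partial>lborel)"
  proof (rule nn_integral_cong)
    fix t :: real
    show "ennreal (indicator {x..} t *\<^sub>R f t) = (\<Sum>m. ennreal (K m) * (ennreal (g m t) * indicator {x..} t))"
    proof (cases "x \<le> t")
      case True
      then have "0 \<le> t" using x by simp
      then have "ennreal (f t) = (\<Sum>m. ennreal (K m * g m t))"
        using K g f_sums
        by (simp add: sums_iff suminf_ennreal2)
      then show ?thesis
        using True K g \<open>0 \<le> t\<close> by (simp add: indicator_def ennreal_mult)
    qed simp
  qed
  also have "\<dots> = (\<Sum>m. ennreal (K m) * (\<integral>\<^sup>+t. ennreal (g m t) * indicator {x..} t \<partial>lborel))"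
    using g_meas by (simp add: nn_integral_suminf nn_integral_cmult)
  also have "\<dots> = (\<Sum>m. ennreal (K m * erlang_tail (Suc u + m) (x\<^sup>2 / 2)))"
  proof (rule suminf_cong)
    fix m
    have "(\<integral>\<^sup>+t. ennreal (g m t) * indicator {x..} t \<partial>lborel) = ennreal (erlang_tail (Suc (m + u)) (x\<^sup>2 / 2))"
      unfolding g_def
    proof (rule nn_integral_poisson_weight_subst)
      show "((\<lambda>t. t\<^sup>2 / 2) has_real_derivative t) (at t)" for t :: real
        by (auto intro!: derivative_eq_intros)
      show "filterlim (\<lambda>t::real. t\<^sup>2 / 2) at_top at_top" by real_asymp
      show "(\<lambda>t. poisson_weight (t\<^sup>2 / 2) (m + u) * t) \<in> borel_measurable borel"
        using g_meas unfolding g_def .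
    qed (use x in auto)
    then show "ennreal (K m) * (\<integral>\<^sup>+t. ennreal (g m t) * indicator {x..} t \<partial>lborel)
        = ennreal (K m * erlang_tail (Suc u + m) (x\<^sup>2 / 2))"
      using K erlang_tail_nonneg by (simp add: ennreal_mult add_ac)
  qed
  also have "\<dots> = ennreal (a ^ u * poisson_mixture_tail (Suc u) (x\<^sup>2 / 2) (a\<^sup>2 / 2))"
  proof -
    have "summable (\<lambda>m. poisson_weight (a\<^sup>2 / 2) m * erlang_tail (Suc u + m) (x\<^sup>2 / 2))"
      by (rule summable_poisson_mixture_tail) simp
    then show ?thesis
      unfolding poisson_mixture_tail_def K_def
      using a erlang_tail_nonneg poisson_weight_nonneg
      by (simp add: suminf_ennreal2 suminf_mult mult.assoc summable_mult)
  qed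
  finally show ?thesis
    using a x poisson_mixture_tail_nonneg[of "x\<^sup>2 / 2" "a\<^sup>2 / 2" "Suc u"] by (simp add: f_def)
qed

lemma marcumQ_eq_poisson_mixture_tail:
  assumes "0 \<le> a" "0 < x"
  shows "marcumQ (Suc u) a x = poisson_mixture_tail (Suc u) (x\<^sup>2 / 2) (a\<^sup>2 / 2)"
proof (cases "a = 0")
  case True
  then show ?thesis
    using assms upper_Gamma_eq_erlang_tail[of "x\<^sup>2 / 2" u] by (simp add: marcumQ_def poisson_mixture_tail_0)
next
  case False
  then show ?thesis
    using assms marcum_integral_eq[of a x u] by (simp add: marcumQ_def)
qed

lemma prob_nc_chi2_greater_eq_marcumQ:
  assumes law: "has_nc_chi2_law P X (2 * n) \<nu>" and "0 < n" "0 \<le> \<nu>" "0 < lam"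
  shows "measure P {\<omega> \<in> space P. X \<omega> > lam} = marcumQ n (sqrt \<nu>) (sqrt lam)"
proof -
  obtain u where "n = Suc u"
    using \<open>0 < n\<close> gr0_implies_Suc by blast
  then show ?thesis
    using prob_nc_chi2_greater[of P X u \<nu> lam] marcumQ_eq_poisson_mixture_tail[of "sqrt \<nu>" "sqrt lam" u] assms
    by simp
qed

lemma marcumQ_mono:
  assumes "0 < n" "0 \<le> a" "a \<le> b" "0 < x"
  shows "marcumQ n a x \<le> marcumQ n b x"
proof -
  obtain u where "n = Suc u"
    using \<open>0 < n\<close> gr0_implies_Suc by blast
  moreover have "a\<^sup>2 / 2 \<le> b\<^sup>2 / 2"
    using assms by (simp add: power_mono)
  ultimately show ?thesis
    using assms by (simp add: marcumQ_eq_poisson_mixture_tail poisson_mixture_tail_mono)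
qed

lemma card_aliased_CRs_le:
  assumes coprime: "\<And>i j. i \<in> {1..v} \<Longrightarrow> j \<in> {1..v} \<Longrightarrow> i \<noteq> j \<Longrightarrow> coprime (M i) (M j)"
    and prod_gt: "\<And>i j. i \<in> {1..v} \<Longrightarrow> j \<in> {1..v} \<Longrightarrow> i \<noteq> j \<Longrightarrow> N < M i * M j"
    and support: "\<Omega> \<subseteq> {..<N}" and bin: "k < N"
  shows "card (aliased_CRs v M \<Omega> k) \<le> card \<Omega>"
proof -
  let ?A = "aliased_CRs v M \<Omega> k"
  define partner where "partner i = (SOME k'. k' \<in> \<Omega> \<and> [k = k'] (mod M i))" for i
  have partner: "partner i \<in> \<Omega>" "[k = partner i] (mod M i)" if "i \<in> ?A" for i
    using someI_ex[of "\<lambda>k'. k' \<in> \<Omega> \<and> [k = k'] (mod M i)"] that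
    unfolding partner_def aliased_CRs_def cong_def by auto
  have "inj_on partner ?A"
  proof (rule inj_onI, rule ccontr)
    fix i j assume i: "i \<in> ?A" and j: "j \<in> ?A" and eq: "partner i = partner j" and "i \<noteq> j"
    then have "i \<in> {1..v}" "j \<in> {1..v}" "k \<notin> \<Omega>"
      unfolding aliased_CRs_def by auto
    then have "[k = partner i] (mod M i * M j)"
      using partner[OF i] partner[OF j] eq coprime \<open>i \<noteq> j\<close> by (simp add: coprime_cong_mult_nat)
    moreover have "k < M i * M j" "partner i < M i * M j"
      using prod_gt[OF \<open>i \<in> {1..v}\<close> \<open>j \<in> {1..v}\<close> \<open>i \<noteq> j\<close>] bin partner(1)[OF i] support by auto
    ultimately have "k = partner i"
      by (rule cong_less_modulus_unique_nat)
    then show False using partner(1)[OF i] \<open>k \<notin> \<Omega>\<close> by simp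
  qed
  moreover have "partner ` ?A \<subseteq> \<Omega>"
    using partner by blast
  moreover have "finite \<Omega>"
    using support finite_subset by blast
  ultimately show ?thesis
    by (rule card_inj_on_le)
qed

theorem theorem1:
  fixes v J N s k :: nat
    and M :: "nat \<Rightarrow> nat"
    and \<gamma> :: "nat \<Rightarrow> nat \<Rightarrow> real"
    and \<Omega> :: "nat set"
    and lam \<mu> :: real
    and P0 :: "'a measure" and X0 :: "'a \<Rightarrow> real"
    and P1 :: "'b measure" and X1 :: "'b \<Rightarrow> real"
  assumes "v \<ge> 1" and "J \<ge> 1" and "N \<ge> 1"
    and primes: "\<forall>i\<in>{1..v}. prime (M i)"
    and distinct: "inj_on M {1..v}"
    and consecutive: "\<forall>p. prime p \<and> (\<exists>i\<in>{1..v}. M i \<le> p) \<and> (\<exists>j\<in>{1..v}. p \<le> M j)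
                         \<longrightarrow> p \<in> M ` {1..v}"
    and prod_gt: "\<forall>i\<in>{1..v}. \<forall>j\<in>{1..v}. i \<noteq> j \<longrightarrow> M i * M j > N"
    and support: "\<Omega> \<subseteq> {..<N}" and sparse: "card \<Omega> \<le> s"
    and bin: "k < N"
    and thr: "lam > 0"
    and snr: "\<forall>i\<in>{1..v}. \<gamma> i k \<ge> 0"
    and H0: "has_nc_chi2_law P0 X0 (2 * J * v)
               (2 / real N * (\<Sum>i\<in>aliased_CRs v M \<Omega> k. real (M i) * \<gamma> i k))"
    and H1: "has_nc_chi2_law P1 X1 (2 * J * v) \<mu>"
    and H1_nc: "\<mu> \<ge> 2 / real N * (\<Sum>i=1..v. real (M i) * \<gamma> i k)"
  shows "card (aliased_CRs v M \<Omega> k) \<le> s \<and>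
    (\<forall>\<Upsilon>. aliased_CRs v M \<Omega> k \<subseteq> \<Upsilon> \<and> \<Upsilon> \<subseteq> {1..v} \<and> card \<Upsilon> = s \<longrightarrow>
       upper_Gamma (real (J * v)) (lam / 2) / Gamma (real (J * v))
         \<le> measure P0 {\<omega> \<in> space P0. X0 \<omega> > lam} \<and>
       measure P0 {\<omega> \<in> space P0. X0 \<omega> > lam}
         \<le> marcumQ (J * v) (sqrt (2 / real N * (\<Sum>i\<in>\<Upsilon>. real (M i) * \<gamma> i k))) (sqrt lam)) \<and>
    measure P1 {\<omega> \<in> space P1. X1 \<omega> > lam}
      \<ge> marcumQ (J * v) (sqrt (2 / real N * (\<Sum>i=1..v. real (M i) * \<gamma> i k))) (sqrt lam)"
proof -
  let ?snr = "\<lambda>A. 2 / real N * (\<Sum>i\<in>A. real (M i) * \<gamma> i k)"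
  let ?\<Upsilon>\<^sub>k = "aliased_CRs v M \<Omega> k"
  have n: "0 < J * v"
    using \<open>v \<ge> 1\<close> \<open>J \<ge> 1\<close> by simp
  have snr_mono: "?snr A \<le> ?snr B" if "A \<subseteq> B" "B \<subseteq> {1..v}" for A B
    using that snr by (intro mult_left_mono sum_mono2) (auto intro: finite_subset)
  have snr_nonneg: "0 \<le> ?snr A" if "A \<subseteq> {1..v}" for A
    using snr_mono[of "{}" A] that by simp
  have aliased_sub: "?\<Upsilon>\<^sub>k \<subseteq> {1..v}"
    unfolding aliased_CRs_def by auto
  have Pf: "measure P0 {\<omega> \<in> space P0. X0 \<omega> > lam} = marcumQ (J * v) (sqrt (?snr ?\<Upsilon>\<^sub>k)) (sqrt lam)"
    using H0 n snr_nonneg[OF aliased_sub] thr by (simp add: prob_nc_chi2_greater_eq_marcumQ mult.assoc)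
  have Pd: "measure P1 {\<omega> \<in> space P1. X1 \<omega> > lam} = marcumQ (J * v) (sqrt \<mu>) (sqrt lam)"
    using H1 n snr_nonneg[OF order_refl] H1_nc thr by (simp add: prob_nc_chi2_greater_eq_marcumQ mult.assoc)
  have Gamma: "upper_Gamma (real (J * v)) (lam / 2) / Gamma (real (J * v)) = marcumQ (J * v) 0 (sqrt lam)"
    using thr by (simp add: marcumQ_def)
  show ?thesis
  proof (intro conjI allI impI)
    show "card ?\<Upsilon>\<^sub>k \<le> s"
      using card_aliased_CRs_le[of v M N \<Omega> k] primes distinct prod_gt support bin sparse
      by (force simp: primes_coprime inj_on_eq_iff)
  next
    fix \<Upsilon> assume "?\<Upsilon>\<^sub>k \<subseteq> \<Upsilon> \<and> \<Upsilon> \<subseteq> {1..v} \<and> card \<Upsilon> = s"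
    then show "upper_Gamma (real (J * v)) (lam / 2) / Gamma (real (J * v))
        \<le> measure P0 {\<omega> \<in> space P0. X0 \<omega> > lam}"
      and "measure P0 {\<omega> \<in> space P0. X0 \<omega> > lam} \<le> marcumQ (J * v) (sqrt (?snr \<Upsilon>)) (sqrt lam)"
      unfolding Gamma Pf using n thr snr_nonneg[OF aliased_sub] snr_mono[of ?\<Upsilon>\<^sub>k \<Upsilon>]
      by (auto intro!: marcumQ_mono)
  next
    show "marcumQ (J * v) (sqrt (?snr {1..v})) (sqrt lam) \<le> measure P1 {\<omega> \<in> space P1. X1 \<omega> > lam}"
      unfolding Pd using n thr snr_nonneg[OF order_refl] H1_nc by (auto intro!: marcumQ_mono)
  qed
qed

end
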